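(* Let $\ast$ be a continuous $t$-norm and let $\{(X_n,M_n,\ast)\}_{n\in\mathbb N}$ be a sequence of nonempty compact non-Archimedean fuzzy metric spaces satisfying: (1) $\ast$ satisfies (TN1); (2) there exists a nondecreasing left-continuous function $C:(0,\infty)\to(0,1]$ with $0<C(s)\le\mathrm{diam}_s(X_n)$ for all $s>0$ and all $n\in\mathbb N$; (3) for every $t>0$ and $0<\varepsilon<1$ there is $N(\varepsilon,t)\in\mathbb N$ with $\mathrm{Cov}(X_n,\varepsilon,t)\le N(\varepsilon,t)$ for all $n$; (4) for every $t>0$ and $0<\varepsilon<1$, with $N=N(\varepsilon,t)$, there exist, for each $n$, a $(t,\varepsilon)$-net $\{x_i^n\}_{i=1}^N$ in $X_n$ such that for all $n,m\in\mathbb N$, all $s>t$ and all $i,j\in\{1,\dots,N\}$: if $M_n(x_i^n,x_j^n,s)<M_m(x_i^m,x_j^m,s)$ then $$\frac{M_n(x_i^n,x_j^n,s)}{M_m(x_i^m,x_j^m,s)\ast(1-\varepsilon)}\ge\frac{M_n(x_i^n,x_j^n,t)}{M_m(x_i^m,x_j^m,t)\ast(1-\varepsilon)}.$$ Then for every $t>0$ and $0<\varepsilon<1$ there is a subsequence $\{(X_{n_k},M_{n_k},\ast)\}_{k\in\mathbb N}$ with $M_{GH}(X_{n_j},X_{n_k},t)>(1-\varepsilon)\ast(1-\varepsilon)$ for all $j,k\in\mathbb N$.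
   Context: A continuous $t$-norm is a binary operation $\ast:[0,1]\times[0,1]\to[0,1]$ which is associative, commutative, continuous, satisfies $a\ast 1=a$ for all $a$, and is monotone ($a\ast b\le c\ast d$ whenever $a\le c$, $b\le d$). Property (TN1): $a-a\ast b\ge a\ast(1-b)$ for all $a,b\in[0,1]$. A fuzzy metric space $(X,M,\ast)$ consists of a set $X$, a continuous $t$-norm $\ast$ and a map $M:X\times X\times[0,\infty)\to[0,1]$ such that for all $x,y,z\in X$ and $t,s>0$: (KM1) $M(x,y,0)=0$; (KM2) $M(x,y,t)=1$ for all $t>0$ iff $x=y$; (KM3) $M(x,y,t)=M(y,x,t)$; (KM4) $M(x,y,t)\ast M(y,z,s)\le M(x,z,t+s)$; (KM5) $M(x,y,\cdot):[0,\infty)\to[0,1]$ is left continuous. It is non-Archimedean if moreover $M(x,z,\max\{t,s\})\ge M(x,y,t)\ast M(y,z,s)$ for all $x,y,z\in X$, $t,s>0$. The balls are $B(x,\varepsilon,t)=\{y: M(x,y,t)>1-\varepsilon\}$ ($0<\varepsilon<1$, $t>0$); they generate the topology, and "compact" refers to it. For nonempty compact $A,B\subseteq X$: $H_M(A,B,t)=\min\{\inf_{a\in A}\sup_{b\in B}M(a,b,t),\ \inf_{b\in B}\sup_{a\in A}M(a,b,t)\}$. A fuzzy metric on the disjoint union $X\sqcup Y$ is admissible if it restricts to the given fuzzy metrics on $X$ and $Y$; $M_{GH}(X,Y,t)=\sup\{H_M(X,Y,t): M$ admissible non-Archimedean fuzzy metric on $X\sqcup Y$ with $t$-norm $\ast\}$.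 A family $\{x_i\}_{i=1}^N$ in $X$ (repetitions allowed) is a $(t,\varepsilon)$-net if for each $x\in X$ there is $i$ with $M(x,x_i,t)>1-\varepsilon$. The cover number $\mathrm{Cov}(X,\varepsilon,t)$ is the minimal cardinality of a set $C\subseteq X$ with $X=\bigcup_{c\in C}B(c,\varepsilon,t)$. The $s$-diameter is $\mathrm{diam}_s(X)=\inf\{M(x,y,s): x,y\in X\}$. *)

theory Defs
  imports "HOL-Analysis.Analysis"
begin

text \<open>Continuous t-norm on [0,1], given as a real function (only its values on [0,1] matter).\<close>
definition cont_tnorm :: "(real \<Rightarrow> real \<Rightarrow> real) \<Rightarrow> bool" where
  "cont_tnorm T \<longleftrightarrow>
     (\<forall>a\<in>{0..1}. \<forall>b\<in>{0..1}. T a b \<in> {0..1}) \<and>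
     (\<forall>a\<in>{0..1}. \<forall>b\<in>{0..1}. \<forall>c\<in>{0..1}. T (T a b) c = T a (T b c)) \<and>
     (\<forall>a\<in>{0..1}. \<forall>b\<in>{0..1}. T a b = T b a) \<and>
     continuous_on ({0..1} \<times> {0..1}) (\<lambda>(a, b). T a b) \<and>
     (\<forall>a\<in>{0..1}. T a 1 = a) \<and>
     (\<forall>a\<in>{0..1}. \<forall>b\<in>{0..1}. \<forall>c\<in>{0..1}. \<forall>d\<in>{0..1}.
        a \<le> c \<longrightarrow> b \<le> d \<longrightarrow> T a b \<le> T c d)"

definition TN1 :: "(real \<Rightarrow> real \<Rightarrow> real) \<Rightarrow> bool" where
  "TN1 T \<longleftrightarrow> (\<forall>a\<in>{0..1}. \<forall>b\<in>{0..1}. a - T a b \<ge> T a (1 - b))"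

definition fuzzy_metric :: "'a set \<Rightarrow> ('a \<Rightarrow> 'a \<Rightarrow> real \<Rightarrow> real) \<Rightarrow> (real \<Rightarrow> real \<Rightarrow> real) \<Rightarrow> bool" where
  "fuzzy_metric X M T \<longleftrightarrow>
     cont_tnorm T \<and>
     (\<forall>x\<in>X. \<forall>y\<in>X. \<forall>t\<ge>0. M x y t \<in> {0..1}) \<and>
     (\<forall>x\<in>X. \<forall>y\<in>X. M x y 0 = 0) \<and>
     (\<forall>x\<in>X. \<forall>y\<in>X. (\<forall>t>0. M x y t = 1) \<longleftrightarrow> x = y) \<and>
     (\<forall>x\<in>X. \<forall>y\<in>X. \<forall>t>0. M x y t = M y x t) \<and>
     (\<forall>x\<in>X. \<forall>y\<in>X. \<forall>z\<in>X. \<forall>t>0. \<forall>s>0. T (M x y t) (M y z s) \<le> M x z (t + s)) \<and>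
     (\<forall>x\<in>X. \<forall>y\<in>X. \<forall>t>0. continuous (at_left t) (M x y))"

definition non_archimedean :: "'a set \<Rightarrow> ('a \<Rightarrow> 'a \<Rightarrow> real \<Rightarrow> real) \<Rightarrow> (real \<Rightarrow> real \<Rightarrow> real) \<Rightarrow> bool" where
  "non_archimedean X M T \<longleftrightarrow> fuzzy_metric X M T \<and>
     (\<forall>x\<in>X. \<forall>y\<in>X. \<forall>z\<in>X. \<forall>t>0. \<forall>s>0. T (M x y t) (M y z s) \<le> M x z (max t s))"

definition fball :: "'a set \<Rightarrow> ('a \<Rightarrow> 'a \<Rightarrow> real \<Rightarrow> real) \<Rightarrow> 'a \<Rightarrow> real \<Rightarrow> real \<Rightarrow> 'a set" where
  "fball X M x e t = {y\<in>X. M x y t > 1 - e}"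

definition fopen :: "'a set \<Rightarrow> ('a \<Rightarrow> 'a \<Rightarrow> real \<Rightarrow> real) \<Rightarrow> 'a set \<Rightarrow> bool" where
  "fopen X M U \<longleftrightarrow> U \<subseteq> X \<and>
     (\<forall>x\<in>U. \<exists>e t. 0 < e \<and> e < 1 \<and> 0 < t \<and> fball X M x e t \<subseteq> U)"

definition fuzzy_topology :: "'a set \<Rightarrow> ('a \<Rightarrow> 'a \<Rightarrow> real \<Rightarrow> real) \<Rightarrow> 'a topology" where
  "fuzzy_topology X M = topology (fopen X M)"

definition fcompact :: "'a set \<Rightarrow> ('a \<Rightarrow> 'a \<Rightarrow> real \<Rightarrow> real) \<Rightarrow> bool" where
  "fcompact X M \<longleftrightarrow>
     (\<forall>\<U>. (\<forall>U\<in>\<U>. fopen X M U) \<and> X \<subseteq> \<Union>\<U> \<longrightarrow> (\<exists>\<F>\<subseteq>\<U>. finite \<F> \<and> X \<subseteq> \<Union>\<F>))"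

definition hausdorff_fuzzy :: "('a \<Rightarrow> 'a \<Rightarrow> real \<Rightarrow> real) \<Rightarrow> 'a set \<Rightarrow> 'a set \<Rightarrow> real \<Rightarrow> real" where
  "hausdorff_fuzzy M A B t =
     min (Inf ((\<lambda>a. Sup ((\<lambda>b. M a b t) ` B)) ` A))
         (Inf ((\<lambda>b. Sup ((\<lambda>a. M a b t) ` A)) ` B))"

definition admissible :: "'a set \<Rightarrow> ('a \<Rightarrow> 'a \<Rightarrow> real \<Rightarrow> real) \<Rightarrow> 'b set \<Rightarrow> ('b \<Rightarrow> 'b \<Rightarrow> real \<Rightarrow> real)
     \<Rightarrow> (real \<Rightarrow> real \<Rightarrow> real) \<Rightarrow> ('a + 'b \<Rightarrow> 'a + 'b \<Rightarrow> real \<Rightarrow> real) \<Rightarrow> bool" where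
  "admissible X MX Y MY T M \<longleftrightarrow>
     non_archimedean (X <+> Y) M T \<and>
     (\<forall>x\<in>X. \<forall>y\<in>X. \<forall>t\<ge>0. M (Inl x) (Inl y) t = MX x y t) \<and>
     (\<forall>x\<in>Y. \<forall>y\<in>Y. \<forall>t\<ge>0. M (Inr x) (Inr y) t = MY x y t)"

definition M_GH :: "'a set \<Rightarrow> ('a \<Rightarrow> 'a \<Rightarrow> real \<Rightarrow> real) \<Rightarrow> 'b set \<Rightarrow> ('b \<Rightarrow> 'b \<Rightarrow> real \<Rightarrow> real)
     \<Rightarrow> (real \<Rightarrow> real \<Rightarrow> real) \<Rightarrow> real \<Rightarrow> real" where
  "M_GH X MX Y MY T t =
     Sup {hausdorff_fuzzy M (Inl ` X) (Inr ` Y) t | M. admissible X MX Y MY T M}"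

text \<open>(t, e)-net: a family x_1..x_N (repetitions allowed).\<close>
definition is_net :: "'a set \<Rightarrow> ('a \<Rightarrow> 'a \<Rightarrow> real \<Rightarrow> real) \<Rightarrow> real \<Rightarrow> real \<Rightarrow> nat \<Rightarrow> (nat \<Rightarrow> 'a) \<Rightarrow> bool" where
  "is_net X M t e N xs \<longleftrightarrow>
     (\<forall>i\<in>{1..N}. xs i \<in> X) \<and> (\<forall>x\<in>X. \<exists>i\<in>{1..N}. M x (xs i) t > 1 - e)"

definition cover_number :: "'a set \<Rightarrow> ('a \<Rightarrow> 'a \<Rightarrow> real \<Rightarrow> real) \<Rightarrow> real \<Rightarrow> real \<Rightarrow> nat" where
  "cover_number X M e t =
     (LEAST n. \<exists>C. C \<subseteq> X \<and> finite C \<and> card C = n \<and> X = (\<Union>c\<in>C. fball X M c e t))"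

definition fdiam :: "'a set \<Rightarrow> ('a \<Rightarrow> 'a \<Rightarrow> real \<Rightarrow> real) \<Rightarrow> real \<Rightarrow> real" where
  "fdiam X M s = Inf {M x y s | x y. x \<in> X \<and> y \<in> X}"

end

theory Submission
  imports Defs
begin

text \<open>Fix \<open>t\<close> and \<open>e\<close>, put \<open>t0 = t / 2\<close> and choose \<open>c < 1\<close> so close to \<open>1\<close> that
  \<open>T c c > T (1 - e) (1 - e)\<close>. By (TN1) the t-norm has no idempotents in \<open>(0, 1)\<close>, hence
  \<open>T a c \<le> a - g\<close> for a uniform \<open>g > 0\<close> and all \<open>a \<ge> C t0\<close>. Bucketing the finitely many
  values \<open>M\<^sub>n (x\<^sub>i\<^sup>n, x\<^sub>j\<^sup>n, t0)\<close> with mesh \<open>g\<close> yields a subsequence along which they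
  differ by less than \<open>g\<close>, and the ratio hypothesis (4) propagates the resulting
  comparison \<open>T (M\<^sub>m (x\<^sub>i\<^sup>m, x\<^sub>j\<^sup>m, s)) c \<le> M\<^sub>n (x\<^sub>i\<^sup>n, x\<^sub>j\<^sup>n, s)\<close> to all \<open>s > t0\<close>.
  Two spaces of the subsequence are then glued along their nets: a point \<open>x\<close> of one and
  \<open>y\<close> of the other get the value \<open>max\<^sub>i T (T (M (x, x\<^sub>i, s)) (M (y\<^sub>i, y, s))) c\<close>
  for \<open>s > t0\<close> and \<open>0\<close> otherwise. The comparison makes this an admissible non-Archimedean
  fuzzy metric, and the nets put every point within \<open>T c c\<close> of the other space at time \<open>t\<close>.\<close>

lemma abs_diff_less_if_floor_div_eq:
  fixes x y g :: real
  assumes "0 < g" and "\<lfloor>x / g\<rfloor> = \<lfloor>y / g\<rfloor>"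
  shows "\<bar>x - y\<bar> < g"
proof -
  have "\<bar>x / g - y / g\<bar> < 1"
    using assms(2) by linarith
  then show ?thesis
    using assms(1) by (simp add: diff_divide_distrib[symmetric] abs_divide)
qed

lemma subseq_uniformly_close:
  fixes f :: "nat \<Rightarrow> 'd \<Rightarrow> real"
  assumes "finite D" and "0 < g" and range: "\<And>n d. d \<in> D \<Longrightarrow> f n d \<in> {a..b}"
  shows "\<exists>r :: nat \<Rightarrow> nat. strict_mono r \<and> (\<forall>j k. \<forall>d\<in>D. \<bar>f (r j) d - f (r k) d\<bar> < g)"
proof -
  define bucket where "bucket n = restrict (\<lambda>d. \<lfloor>f n d / g\<rfloor>) D" for n
  have "range bucket \<subseteq> PiE D (\<lambda>_. {\<lfloor>a / g\<rfloor>..\<lfloor>b / g\<rfloor>})"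
    using range \<open>0 < g\<close> by (auto simp: bucket_def divide_right_mono floor_mono)
  then have "finite (range bucket)"
    by (rule finite_subset) (simp add: finite_PiE \<open>finite D\<close>)
  then obtain y where "infinite (bucket -` {y})"
    using inf_img_fin_dom by blast
  then obtain r :: "nat \<Rightarrow> nat" where r: "strict_mono r" "\<And>n. r n \<in> bucket -` {y}"
    using infinite_enumerate by blast
  have "bucket (r j) = bucket (r k)" for j k
    using r(2) by simp
  then have "\<lfloor>f (r j) d / g\<rfloor> = \<lfloor>f (r k) d / g\<rfloor>" if "d \<in> D" for j k d
    using fun_cong[of "bucket (r j)" "bucket (r k)" d] that by (simp add: bucket_def)
  then show ?thesis
    using r(1) abs_diff_less_if_floor_div_eq[OF \<open>0 < g\<close>] by blast
qed

lemma tendsto_Max_finite: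
  fixes f :: "'i \<Rightarrow> 'x \<Rightarrow> real"
  assumes "finite I" "I \<noteq> {}" "\<And>i. i \<in> I \<Longrightarrow> (f i \<longlongrightarrow> l i) F"
  shows "((\<lambda>x. Max ((\<lambda>i. f i x) ` I)) \<longlongrightarrow> Max (l ` I)) F"
  using assms
proof (induction I rule: finite_ne_induct)
  case (singleton i)
  then show ?case by simp
next
  case (insert j I)
  then have "((\<lambda>x. max (f j x) (Max ((\<lambda>i. f i x) ` I))) \<longlongrightarrow> max (l j) (Max (l ` I))) F"
    by (intro tendsto_max) auto
  then show ?case
    using insert by simp
qed

locale tnorm =
  fixes T :: "real \<Rightarrow> real \<Rightarrow> real"
  assumes cont_tnorm: "cont_tnorm T"
begin

lemma T_closed: "a \<in> {0..1} \<Longrightarrow> b \<in> {0..1} \<Longrightarrow> T a b \<in> {0..1}"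
  using cont_tnorm unfolding cont_tnorm_def by blast

lemma T_nonneg: "0 \<le> a \<Longrightarrow> a \<le> 1 \<Longrightarrow> 0 \<le> b \<Longrightarrow> b \<le> 1 \<Longrightarrow> 0 \<le> T a b"
  using T_closed by simp

lemma T_le_one: "0 \<le> a \<Longrightarrow> a \<le> 1 \<Longrightarrow> 0 \<le> b \<Longrightarrow> b \<le> 1 \<Longrightarrow> T a b \<le> 1"
  using T_closed by simp

lemma T_assoc: "a \<in> {0..1} \<Longrightarrow> b \<in> {0..1} \<Longrightarrow> c \<in> {0..1} \<Longrightarrow> T (T a b) c = T a (T b c)"
  using cont_tnorm unfolding cont_tnorm_def by blast

lemma T_commute: "a \<in> {0..1} \<Longrightarrow> b \<in> {0..1} \<Longrightarrow> T a b = T b a"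
  using cont_tnorm unfolding cont_tnorm_def by blast

lemma T_left_commute: "a \<in> {0..1} \<Longrightarrow> b \<in> {0..1} \<Longrightarrow> c \<in> {0..1} \<Longrightarrow> T a (T b c) = T b (T a c)"
  using T_assoc[of a b c] T_assoc[of b a c] T_commute[of a b] by simp

lemma T_one: "a \<in> {0..1} \<Longrightarrow> T a 1 = a"
  using cont_tnorm unfolding cont_tnorm_def by blast

lemma T_mono: "a \<in> {0..1} \<Longrightarrow> b \<in> {0..1} \<Longrightarrow> c \<in> {0..1} \<Longrightarrow> d \<in> {0..1} \<Longrightarrow>
    a \<le> c \<Longrightarrow> b \<le> d \<Longrightarrow> T a b \<le> T c d"
  using cont_tnorm unfolding cont_tnorm_def by blast

lemma T_le_left: "a \<in> {0..1} \<Longrightarrow> b \<in> {0..1} \<Longrightarrow> T a b \<le> a"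
  using T_mono[of a b a 1] T_one by auto

lemma T_le_right: "a \<in> {0..1} \<Longrightarrow> b \<in> {0..1} \<Longrightarrow> T a b \<le> b"
  using T_le_left[of b a] T_commute[of a b] by simp

lemma T_zero: "a \<in> {0..1} \<Longrightarrow> T a 0 = 0"
  using T_le_right[of a 0] T_closed[of a 0] by auto

lemma T_zero_left: "a \<in> {0..1} \<Longrightarrow> T 0 a = 0"
  using T_le_left[of 0 a] T_closed[of 0 a] by auto

lemma continuous_on_T:
  assumes "continuous_on S f" "continuous_on S g" "f ` S \<subseteq> {0..1}" "g ` S \<subseteq> {0..1}"
  shows "continuous_on S (\<lambda>x. T (f x) (g x))"
proof -
  have "continuous_on ({0..1} \<times> {0..1}) (\<lambda>(a, b). T a b)"
    using cont_tnorm unfolding cont_tnorm_def by blast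
  from continuous_on_compose2[OF this, of S "\<lambda>x. (f x, g x)"] show ?thesis
    using assms by (auto intro: continuous_on_Pair)
qed

lemma tendsto_T:
  assumes "(f \<longlongrightarrow> a) F" "(g \<longlongrightarrow> b) F" "a \<in> {0..1}" "b \<in> {0..1}"
    and "eventually (\<lambda>x. f x \<in> {0..1} \<and> g x \<in> {0..1}) F"
  shows "((\<lambda>x. T (f x) (g x)) \<longlongrightarrow> T a b) F"
proof -
  have "continuous_on ({0..1} \<times> {0..1}) (\<lambda>(a, b). T a b)"
    using cont_tnorm unfolding cont_tnorm_def by blast
  from continuous_on_tendsto_compose[OF this tendsto_Pair[OF assms(1,2)]] show ?thesis
    using assms(3-) by (auto elim!: eventually_mono)
qed

lemma T_idempotent_absorbs:
  assumes L: "L \<in> {0..1}" "T L L = L" and y: "0 \<le> y" "y \<le> L"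
  shows "T y L = y"
proof -
  have "continuous_on {0..1} (\<lambda>x. T L x)"
    using L T_closed by (intro continuous_on_T) (auto simp: continuous_on_const continuous_on_id)
  then obtain x where x: "x \<in> {0..1}" "T L x = y"
    using IVT'[of "T L" 0 y 1] L y T_zero T_one by auto
  have "T y L = T L (T L x)"
    using x L y T_commute[of y L] by simp
  also have "\<dots> = y"
    using x L T_assoc[of L L x] by simp
  finally show ?thesis .
qed

lemma TN1_idempotent_trivial:
  assumes "TN1 T" and L: "L \<in> {0..1}" "T L L = L"
  shows "L = 0 \<or> L = 1"
proof (rule ccontr)
  assume "\<not> (L = 0 \<or> L = 1)"
  with L have L01: "0 < L" "L < 1" by auto
  have "T L (1 - L) \<le> 0"
    using \<open>TN1 T\<close> L L01 unfolding TN1_def by fastforce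
  moreover have "0 < T L (1 - L)"
  proof (cases "1 - L \<le> L")
    case True
    then show ?thesis
      using T_idempotent_absorbs[OF L, of "1 - L"] T_commute[of L "1 - L"] L01 by auto
  next
    case False
    then show ?thesis
      using T_mono[of L L L "1 - L"] L L01 by auto
  qed
  ultimately show False by simp
qed

text \<open>If \<open>T a c = a\<close>, the least \<open>z\<close> with \<open>T a z = a\<close> is a nontrivial idempotent.\<close>

lemma TN1_T_less:
  assumes "TN1 T" and a: "0 < a" "a \<le> 1" and c: "0 \<le> c" "c < 1"
  shows "T a c < a"
proof (rule ccontr)
  assume "\<not> T a c < a"
  with T_le_left[of a c] a c have "T a c = a" by simp
  define Z where "Z = {z \<in> {0..1}. T a z = a}"
  define L where "L = Inf Z"
  have "closed Z"
    unfolding Z_def using a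
    by (intro continuous_closed_preimage_constant continuous_on_T)
      (auto simp: continuous_on_const continuous_on_id)
  moreover have "c \<in> Z" "bdd_below Z"
    using \<open>T a c = a\<close> c unfolding Z_def by auto
  ultimately have "L \<in> Z" "L \<le> c"
    unfolding L_def using closed_contains_Inf cInf_lower by blast+
  then have L: "L \<in> {0..1}" "T a L = a"
    unfolding Z_def by auto
  then have "T a (T L L) = a"
    using T_assoc[of a L L] a by simp
  then have "T L L \<in> Z"
    using L T_closed unfolding Z_def by auto
  then have "T L L = L"
    using cInf_lower[OF _ \<open>bdd_below Z\<close>] T_le_left[OF L(1) L(1)] unfolding L_def by fastforce
  moreover have "L \<noteq> 0" "L \<noteq> 1"
    using L a T_zero \<open>L \<le> c\<close> c by auto
  ultimately show False
    using TN1_idempotent_trivial[OF \<open>TN1 T\<close> L(1)] by blast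
qed

lemma TN1_uniform_gap:
  assumes "TN1 T" and b: "0 < b" "b \<le> 1" and c: "0 \<le> c" "c < 1"
  shows "\<exists>g>0. \<forall>a\<in>{b..1}. T a c \<le> a - g"
proof -
  have "continuous_on {b..1} (\<lambda>a. T a c)"
    by (rule continuous_on_T[OF continuous_on_id continuous_on_const]) (use b c in auto)
  then have "continuous_on {b..1} (\<lambda>a. a - T a c)"
    by (intro continuous_on_diff continuous_on_id)
  moreover have "{b..1} \<noteq> {}"
    using b by simp
  ultimately obtain a0 where a0: "a0 \<in> {b..1}" "\<forall>a\<in>{b..1}. a0 - T a0 c \<le> a - T a c"
    using continuous_attains_inf[OF compact_Icc] by blast
  have "T a0 c < a0"
    using TN1_T_less[OF \<open>TN1 T\<close>, of a0 c] a0 b c by auto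
  then show ?thesis
    using a0(2) by (intro exI[of _ "a0 - T a0 c"]) auto
qed

lemma T_near_one:
  assumes "\<theta> < 1" and b: "0 < b" "b \<le> 1"
  shows "\<exists>c. 0 < c \<and> c < 1 \<and> \<theta> < T c c \<and> 0 < T b c"
proof -
  have near: "eventually (\<lambda>x. x \<in> {0<..<1}) (at_left (1::real))"
    by (rule eventually_at_left_real) simp
  then have in01: "eventually (\<lambda>x. x \<in> {0..1}) (at_left (1::real))"
    by (auto elim: eventually_mono)
  have "((\<lambda>x. T x x) \<longlongrightarrow> T 1 1) (at_left 1)"
    using in01 by (intro tendsto_T tendsto_ident_at) auto
  then have "eventually (\<lambda>x. \<theta> < T x x) (at_left 1)"
    using order_tendstoD(1) T_one[of 1] \<open>\<theta> < 1\<close> by simp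
  moreover have "((\<lambda>x. T b x) \<longlongrightarrow> T b 1) (at_left 1)"
    using in01 b by (intro tendsto_T tendsto_ident_at tendsto_const) auto
  then have "eventually (\<lambda>x. 0 < T b x) (at_left 1)"
    using order_tendstoD(1) T_one[of b] b by simp
  ultimately have "eventually (\<lambda>x. 0 < x \<and> x < 1 \<and> \<theta> < T x x \<and> 0 < T b x) (at_left 1)"
    using near by eventually_elim auto
  then show ?thesis
    using eventually_happens'[OF trivial_limit_at_left_real] by blast
qed

lemma T_le_if_ratio_bound:
  assumes c: "c \<in> {0..1}" and b: "0 \<le> b0" "b0 \<le> b" "b \<le> 1"
    and pos: "0 < T b0 c" and a0: "T b0 c \<le> a0"
    and ratio: "a < b \<Longrightarrow> a0 / T b0 c \<le> a / T b c"
  shows "T b c \<le> a"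
proof (cases "a < b")
  case False
  then show ?thesis
    using T_le_left[of b c] b c by auto
next
  case True
  have "T b0 c \<le> T b c"
    using T_mono[of b0 c b c] b c by auto
  have "1 \<le> a0 / T b0 c"
    using a0 pos by simp
  also have "\<dots> \<le> a / T b c"
    using ratio[OF True] .
  finally show ?thesis
    using pos \<open>T b0 c \<le> T b c\<close> by (simp add: le_divide_eq)
qed

lemma TN1_comparable_subseq:
  fixes d :: "nat \<Rightarrow> 'i \<Rightarrow> 'i \<Rightarrow> real \<Rightarrow> real"
  assumes "TN1 T" and "finite I" and c: "0 \<le> c" "c < 1" and b: "0 < b" "b \<le> 1" "0 < T b c"
    and range: "\<And>n i j s. i \<in> I \<Longrightarrow> j \<in> I \<Longrightarrow> t0 \<le> s \<Longrightarrow> d n i j s \<in> {0..1}"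
    and mono: "\<And>n i j s. i \<in> I \<Longrightarrow> j \<in> I \<Longrightarrow> t0 \<le> s \<Longrightarrow> d n i j t0 \<le> d n i j s"
    and lower: "\<And>n i j. i \<in> I \<Longrightarrow> j \<in> I \<Longrightarrow> b \<le> d n i j t0"
    and ratio: "\<And>n m i j s. i \<in> I \<Longrightarrow> j \<in> I \<Longrightarrow> t0 < s \<Longrightarrow> d n i j s < d m i j s \<Longrightarrow>
      d n i j t0 / T (d m i j t0) c \<le> d n i j s / T (d m i j s) c"
  shows "\<exists>r :: nat \<Rightarrow> nat. strict_mono r \<and>
    (\<forall>j k i l s. i \<in> I \<longrightarrow> l \<in> I \<longrightarrow> t0 < s \<longrightarrow> T (d (r k) i l s) c \<le> d (r j) i l s)"
proof -
  obtain g where "0 < g" and gap: "\<forall>a\<in>{b..1}. T a c \<le> a - g"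
    using TN1_uniform_gap[OF \<open>TN1 T\<close> b(1,2) c] by blast
  obtain r :: "nat \<Rightarrow> nat" where "strict_mono r"
    and close: "\<forall>j k. \<forall>p\<in>I \<times> I. \<bar>d (r j) (fst p) (snd p) t0 - d (r k) (fst p) (snd p) t0\<bar> < g"
    using subseq_uniformly_close[of "I \<times> I" g "\<lambda>n p. d n (fst p) (snd p) t0" 0 1]
      \<open>finite I\<close> \<open>0 < g\<close> range by auto
  have "T (d (r k) i l s) c \<le> d (r j) i l s" if "i \<in> I" "l \<in> I" "t0 < s" for j k i l s
  proof (rule T_le_if_ratio_bound)
    let ?b0 = "d (r k) i l t0"
    have "b \<le> ?b0" "?b0 \<le> 1"
      using lower range that by auto
    then have "T b c \<le> T ?b0 c"
      using T_mono[of b c ?b0 c] b c by auto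
    then show "0 < T ?b0 c"
      using b by linarith
    have "T ?b0 c \<le> ?b0 - g"
      using gap \<open>b \<le> ?b0\<close> \<open>?b0 \<le> 1\<close> by simp
    moreover have "\<bar>d (r j) i l t0 - ?b0\<bar> < g"
      using close that by fastforce
    ultimately show "T ?b0 c \<le> d (r j) i l t0"
      by linarith
  qed (use c range mono ratio that in auto)
  then show ?thesis
    using \<open>strict_mono r\<close> by blast
qed

end

lemma non_archimedean_tnorm: "non_archimedean X M T \<Longrightarrow> tnorm T"
  by (simp add: tnorm.intro non_archimedean_def fuzzy_metric_def)

context
  fixes X M T
  assumes na: "non_archimedean X M T"
begin

lemma nonarch_range: "x \<in> X \<Longrightarrow> y \<in> X \<Longrightarrow> 0 \<le> s \<Longrightarrow> M x y s \<in> {0..1}"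
  using na by (simp add: non_archimedean_def fuzzy_metric_def)

lemma nonarch_zero: "x \<in> X \<Longrightarrow> y \<in> X \<Longrightarrow> M x y 0 = 0"
  using na by (simp add: non_archimedean_def fuzzy_metric_def)

lemma nonarch_eq_one_iff: "x \<in> X \<Longrightarrow> y \<in> X \<Longrightarrow> (\<forall>s>0. M x y s = 1) \<longleftrightarrow> x = y"
  using na by (simp add: non_archimedean_def fuzzy_metric_def)

lemma nonarch_self: "x \<in> X \<Longrightarrow> 0 < s \<Longrightarrow> M x x s = 1"
  using nonarch_eq_one_iff by blast

lemma nonarch_commute: "x \<in> X \<Longrightarrow> y \<in> X \<Longrightarrow> 0 < s \<Longrightarrow> M x y s = M y x s"
  using na by (simp add: non_archimedean_def fuzzy_metric_def)

lemma nonarch_ultra: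
  "x \<in> X \<Longrightarrow> y \<in> X \<Longrightarrow> z \<in> X \<Longrightarrow> 0 < s \<Longrightarrow> 0 < s' \<Longrightarrow> T (M x y s) (M y z s') \<le> M x z (max s s')"
  using na by (simp add: non_archimedean_def)

lemma nonarch_left_cont: "x \<in> X \<Longrightarrow> y \<in> X \<Longrightarrow> 0 < s \<Longrightarrow> continuous (at_left s) (M x y)"
  using na by (simp add: non_archimedean_def fuzzy_metric_def)

lemma nonarch_mono:
  assumes "x \<in> X" "y \<in> X" "0 < s" "s \<le> s'"
  shows "M x y s \<le> M x y s'"
proof -
  interpret tnorm T
    using na by (rule non_archimedean_tnorm)
  have "T (M x y s) (M y y s') \<le> M x y s'"
    using nonarch_ultra[of x y y s s'] assms by (simp add: max_absorb2)
  then show ?thesis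
    using nonarch_self[of y s'] T_one nonarch_range[of x y s] assms by simp
qed

lemma fdiam_le: "x \<in> X \<Longrightarrow> y \<in> X \<Longrightarrow> 0 \<le> s \<Longrightarrow> fdiam X M s \<le> M x y s"
  unfolding fdiam_def using nonarch_range by (intro cInf_lower bdd_belowI[of _ 0]) fastforce+

end

lemma non_archimedeanI:
  assumes "tnorm T"
    and range: "\<And>x y s. x \<in> X \<Longrightarrow> y \<in> X \<Longrightarrow> 0 \<le> s \<Longrightarrow> M x y s \<in> {0..1}"
    and zero: "\<And>x y. x \<in> X \<Longrightarrow> y \<in> X \<Longrightarrow> M x y 0 = 0"
    and eq_one_iff: "\<And>x y. x \<in> X \<Longrightarrow> y \<in> X \<Longrightarrow> (\<forall>s>0. M x y s = 1) \<longleftrightarrow> x = y"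
    and commute: "\<And>x y s. x \<in> X \<Longrightarrow> y \<in> X \<Longrightarrow> 0 < s \<Longrightarrow> M x y s = M y x s"
    and ultra: "\<And>x y z s s'. x \<in> X \<Longrightarrow> y \<in> X \<Longrightarrow> z \<in> X \<Longrightarrow> 0 < s \<Longrightarrow> 0 < s'
      \<Longrightarrow> T (M x y s) (M y z s') \<le> M x z (max s s')"
    and left_cont: "\<And>x y s. x \<in> X \<Longrightarrow> y \<in> X \<Longrightarrow> 0 < s \<Longrightarrow> continuous (at_left s) (M x y)"
  shows "non_archimedean X M T"
proof -
  interpret tnorm T by fact
  have mono: "M x y s \<le> M x y s'" if "x \<in> X" "y \<in> X" "0 < s" "s \<le> s'" for x y s s'
    using ultra[of x y y s s'] eq_one_iff[of y y] range[of x y s] T_one that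
    by (simp add: max_absorb2)
  have triangle: "T (M x y s) (M y z s') \<le> M x z (s + s')"
    if "x \<in> X" "y \<in> X" "z \<in> X" "0 < s" "0 < s'" for x y z s s'
  proof -
    have "M x z (max s s') \<le> M x z (s + s')"
      using that by (intro mono) (auto simp: less_max_iff_disj)
    then show ?thesis
      using ultra[OF that] by linarith
  qed
  show ?thesis
    unfolding non_archimedean_def fuzzy_metric_def
    by (intro conjI ballI allI impI cont_tnorm range zero eq_one_iff commute ultra left_cont
        triangle)
qed

lemma hausdorff_fuzzy_le_one:
  assumes "non_archimedean (A <+> B) M T" "A \<noteq> {}" "B \<noteq> {}" "0 \<le> t"
  shows "hausdorff_fuzzy M (Inl ` A) (Inr ` B) t \<le> 1"
proof -
  obtain a b where "a \<in> A" "b \<in> B"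
    using assms(2,3) by blast
  have range: "M p q t \<in> {0..1}" if "p \<in> A <+> B" "q \<in> A <+> B" for p q
    using nonarch_range[OF assms(1) that assms(4)] .
  have "0 \<le> Sup ((\<lambda>q. M p q t) ` Inr ` B)" if "p \<in> Inl ` A" for p
    using that \<open>b \<in> B\<close> range by (intro cSup_upper2[of "M p (Inr b) t"] bdd_aboveI[of _ 1]) auto
  then have "Inf ((\<lambda>p. Sup ((\<lambda>q. M p q t) ` Inr ` B)) ` Inl ` A)
      \<le> Sup ((\<lambda>q. M (Inl a) q t) ` Inr ` B)"
    using \<open>a \<in> A\<close> by (intro cInf_lower bdd_belowI[of _ 0]) auto
  also have "\<dots> \<le> 1"
    using assms(3) \<open>a \<in> A\<close> range by (intro cSup_least) auto
  finally show ?thesis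
    unfolding hausdorff_fuzzy_def by linarith
qed

lemma le_M_GH:
  assumes "admissible X MX Y MY T M" "X \<noteq> {}" "Y \<noteq> {}" "0 \<le> t"
    and "h \<le> hausdorff_fuzzy M (Inl ` X) (Inr ` Y) t"
  shows "h \<le> M_GH X MX Y MY T t"
  unfolding M_GH_def
proof (rule cSup_upper2[OF _ assms(5)])
  show "bdd_above {hausdorff_fuzzy M (Inl ` X) (Inr ` Y) t |M. admissible X MX Y MY T M}"
    using hausdorff_fuzzy_le_one[OF _ assms(2-4)] unfolding admissible_def
    by (intro bdd_aboveI[of _ 1]) blast
qed (use assms(1) in blast)

text \<open>Points of the two spaces are linked through corresponding net points \<open>xs i\<close>, \<open>ys i\<close>
  at the price of the factor \<open>c\<close>; vanishing up to \<open>t0\<close> keeps the two copies apart (KM2).\<close>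

definition net_bridge ::
  "(real \<Rightarrow> real \<Rightarrow> real) \<Rightarrow> ('a \<Rightarrow> 'a \<Rightarrow> real \<Rightarrow> real) \<Rightarrow> ('b \<Rightarrow> 'b \<Rightarrow> real \<Rightarrow> real) \<Rightarrow>
    (nat \<Rightarrow> 'a) \<Rightarrow> (nat \<Rightarrow> 'b) \<Rightarrow> nat \<Rightarrow> real \<Rightarrow> real \<Rightarrow> 'a \<Rightarrow> 'b \<Rightarrow> real \<Rightarrow> real" where
  "net_bridge T MX MY xs ys N c t0 x y s =
    (if s \<le> t0 then 0 else Max ((\<lambda>i. T (T (MX x (xs i) s) (MY (ys i) y s)) c) ` {1..N}))"

definition net_glue ::
  "(real \<Rightarrow> real \<Rightarrow> real) \<Rightarrow> ('a \<Rightarrow> 'a \<Rightarrow> real \<Rightarrow> real) \<Rightarrow> ('b \<Rightarrow> 'b \<Rightarrow> real \<Rightarrow> real) \<Rightarrow>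
    (nat \<Rightarrow> 'a) \<Rightarrow> (nat \<Rightarrow> 'b) \<Rightarrow> nat \<Rightarrow> real \<Rightarrow> real \<Rightarrow> 'a + 'b \<Rightarrow> 'a + 'b \<Rightarrow> real \<Rightarrow> real" where
  "net_glue T MX MY xs ys N c t0 p q = (case (p, q) of
      (Inl x, Inl x') \<Rightarrow> MX x x'
    | (Inr y, Inr y') \<Rightarrow> MY y y'
    | (Inl x, Inr y) \<Rightarrow> net_bridge T MX MY xs ys N c t0 x y
    | (Inr y, Inl x) \<Rightarrow> net_bridge T MX MY xs ys N c t0 x y)"

lemma net_glue_simps [simp]:
  "net_glue T MX MY xs ys N c t0 (Inl x) (Inl x') = MX x x'"
  "net_glue T MX MY xs ys N c t0 (Inr y) (Inr y') = MY y y'"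
  "net_glue T MX MY xs ys N c t0 (Inl x) (Inr y) = net_bridge T MX MY xs ys N c t0 x y"
  "net_glue T MX MY xs ys N c t0 (Inr y) (Inl x) = net_bridge T MX MY xs ys N c t0 x y"
  by (simp_all add: net_glue_def)

locale net_gluing =
  fixes T :: "real \<Rightarrow> real \<Rightarrow> real"
    and X :: "'a set" and MX :: "'a \<Rightarrow> 'a \<Rightarrow> real \<Rightarrow> real"
    and Y :: "'b set" and MY :: "'b \<Rightarrow> 'b \<Rightarrow> real \<Rightarrow> real"
    and xs :: "nat \<Rightarrow> 'a" and ys :: "nat \<Rightarrow> 'b" and N :: nat and c t0 :: real
  assumes nonarch_X: "non_archimedean X MX T" and nonarch_Y: "non_archimedean Y MY T"
    and xs_in: "\<And>i. i \<in> {1..N} \<Longrightarrow> xs i \<in> X" and ys_in: "\<And>i. i \<in> {1..N} \<Longrightarrow> ys i \<in> Y"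
    and N: "1 \<le> N" and c: "c \<in> {0..1}" and t0: "0 < t0"
    and comparable_YX: "\<And>s i j. t0 < s \<Longrightarrow> i \<in> {1..N} \<Longrightarrow> j \<in> {1..N} \<Longrightarrow>
      T (MY (ys i) (ys j) s) c \<le> MX (xs i) (xs j) s"
    and comparable_XY: "\<And>s i j. t0 < s \<Longrightarrow> i \<in> {1..N} \<Longrightarrow> j \<in> {1..N} \<Longrightarrow>
      T (MX (xs i) (xs j) s) c \<le> MY (ys i) (ys j) s"
begin

sublocale tnorm T
  using nonarch_X by (rule non_archimedean_tnorm)

abbreviation "bridge \<equiv> net_bridge T MX MY xs ys N c t0"

abbreviation "glue \<equiv> net_glue T MX MY xs ys N c t0"

lemmas X_range = nonarch_range[OF nonarch_X] and Y_range = nonarch_range[OF nonarch_Y]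

lemma bridge_eq_zero: "s \<le> t0 \<Longrightarrow> bridge x y s = 0"
  by (simp add: net_bridge_def)

lemma bridge_attained:
  assumes "t0 < s"
  shows "\<exists>i\<in>{1..N}. bridge x y s = T (T (MX x (xs i) s) (MY (ys i) y s)) c"
proof -
  have "Max ((\<lambda>i. T (T (MX x (xs i) s) (MY (ys i) y s)) c) ` {1..N})
      \<in> (\<lambda>i. T (T (MX x (xs i) s) (MY (ys i) y s)) c) ` {1..N}"
    using N by (intro Max_in) auto
  then show ?thesis
    using assms by (auto simp: net_bridge_def)
qed

lemma bridge_ge:
  "t0 < s \<Longrightarrow> i \<in> {1..N} \<Longrightarrow> T (T (MX x (xs i) s) (MY (ys i) y s)) c \<le> bridge x y s"
  by (auto simp: net_bridge_def intro!: Max_ge)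

lemma bridge_range:
  assumes "x \<in> X" "y \<in> Y" "0 \<le> s"
  shows "bridge x y s \<in> {0..1}"
proof (cases "s \<le> t0")
  case False
  then obtain i where "i \<in> {1..N}" "bridge x y s = T (T (MX x (xs i) s) (MY (ys i) y s)) c"
    using bridge_attained by force
  then show ?thesis
    using assms X_range Y_range xs_in ys_in c by (simp add: T_nonneg T_le_one)
qed (simp add: bridge_eq_zero)

lemma ultra_XXY:
  assumes "x \<in> X" "x' \<in> X" "y \<in> Y" "0 < s" "0 < s'"
  shows "T (MX x x' s) (bridge x' y s') \<le> bridge x y (max s s')"
proof (cases "s' \<le> t0")
  case True
  then show ?thesis
    using bridge_range[of x y "max s s'"] X_range[of x x' s] assms
    by (simp add: bridge_eq_zero T_zero)
next
  case False
  define m where "m = max s s'"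
  then have "t0 < m" "s' \<le> m"
    using False by auto
  obtain i where i: "i \<in> {1..N}"
    and bridge_i: "bridge x' y s' = T (T (MX x' (xs i) s') (MY (ys i) y s')) c"
    using bridge_attained False by force
  have range: "MX x x' s \<in> {0..1}" "MX x' (xs i) s' \<in> {0..1}" "MY (ys i) y s' \<in> {0..1}"
    "MX x (xs i) m \<in> {0..1}" "MY (ys i) y m \<in> {0..1}"
    using X_range Y_range xs_in ys_in i assms \<open>t0 < m\<close> t0 by auto
  have "T (MX x x' s) (bridge x' y s') = T (T (T (MX x x' s) (MX x' (xs i) s')) (MY (ys i) y s')) c"
    using range c by (simp add: bridge_i T_assoc T_nonneg T_le_one)
  also have "\<dots> \<le> T (T (MX x (xs i) m) (MY (ys i) y m)) c"
  proof -
    have "T (MX x x' s) (MX x' (xs i) s') \<le> MX x (xs i) m"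
      using nonarch_ultra[OF nonarch_X] xs_in i assms unfolding m_def by blast
    moreover have "MY (ys i) y s' \<le> MY (ys i) y m"
      using nonarch_mono[OF nonarch_Y] ys_in i assms \<open>s' \<le> m\<close> by blast
    ultimately show ?thesis
      using range c by (intro T_mono T_closed) auto
  qed
  also have "\<dots> \<le> bridge x y m"
    using bridge_ge \<open>t0 < m\<close> i by blast
  finally show ?thesis
    unfolding m_def .
qed

lemma ultra_XYX:
  assumes x: "x \<in> X" "x' \<in> X" and y: "y \<in> Y" and s: "0 < s" "0 < s'"
  shows "T (bridge x y s) (bridge x' y s') \<le> MX x x' (max s s')"
proof (cases "s \<le> t0 \<or> s' \<le> t0")
  case True
  then show ?thesis
    using bridge_range x y s X_range[of x x' "max s s'"]
    by (auto simp: bridge_eq_zero T_zero T_zero_left)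
next
  case False
  define m where "m = max s s'"
  then have m: "t0 < m" "s \<le> m" "s' \<le> m"
    using False by auto
  obtain i where i: "i \<in> {1..N}" "bridge x y s = T (T (MX x (xs i) s) (MY (ys i) y s)) c"
    using bridge_attained False by force
  obtain j where j: "j \<in> {1..N}" "bridge x' y s' = T (T (MX x' (xs j) s') (MY (ys j) y s')) c"
    using bridge_attained False by force
  define P Q R S where "P = MX x (xs i) m" and "Q = MY (ys i) y m"
    and "R = MY y (ys j) m" and "S = MX (xs j) x' m"
  have range: "P \<in> {0..1}" "Q \<in> {0..1}" "R \<in> {0..1}" "S \<in> {0..1}"
    "MX (xs i) (xs j) m \<in> {0..1}" "MY (ys i) (ys j) m \<in> {0..1}" "MX x (xs j) m \<in> {0..1}"
    unfolding P_def Q_def R_def S_def using X_range Y_range x y xs_in ys_in i j m t0 by auto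
  have "bridge x y s \<le> T (T P Q) c"
  proof -
    have "MX x (xs i) s \<le> P" "MY (ys i) y s \<le> Q"
      unfolding P_def Q_def using nonarch_mono[OF nonarch_X] nonarch_mono[OF nonarch_Y]
        x y xs_in ys_in i m s by auto
    then show ?thesis
      using i range c X_range Y_range x y xs_in ys_in s by (auto intro!: T_mono T_closed)
  qed
  moreover have "bridge x' y s' \<le> T S R"
  proof -
    have "MX x' (xs j) s' \<le> S" "MY (ys j) y s' \<le> R"
      unfolding S_def R_def
      using nonarch_mono[OF nonarch_X] nonarch_mono[OF nonarch_Y] nonarch_commute[OF nonarch_X]
        nonarch_commute[OF nonarch_Y] x y xs_in ys_in j m s t0 by (metis less_le_trans)+
    moreover have "bridge x' y s' \<le> T (MX x' (xs j) s') (MY (ys j) y s')"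
      using j T_le_left T_closed X_range Y_range x y xs_in ys_in c s by auto
    ultimately show ?thesis
      using range X_range Y_range x y xs_in ys_in j s by (auto elim!: order_trans intro!: T_mono)
  qed
  txt \<open>Follow the path \<open>x, xs i, ys i, y, ys j, xs j, x'\<close>; the comparability hypothesis
    trades the detour \<open>ys i, ys j\<close> through \<open>Y\<close> and the factor \<open>c\<close> for \<open>xs i, xs j\<close>.\<close>
  ultimately have "T (bridge x y s) (bridge x' y s') \<le> T (T (T P Q) c) (T S R)"
    using bridge_range x y s range c by (intro T_mono T_closed) auto
  also have "\<dots> = T (T P (T (T Q R) c)) S"
    using range c by (simp add: T_assoc T_commute T_left_commute T_nonneg T_le_one)
  also have "\<dots> \<le> T (T P (T (MY (ys i) (ys j) m) c)) S"
    using nonarch_ultra[OF nonarch_Y, of "ys i" y "ys j" m m] ys_in i j y m t0 range c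
    unfolding Q_def R_def by (intro T_mono T_closed) auto
  also have "\<dots> \<le> T (T P (MX (xs i) (xs j) m)) S"
    using comparable_YX[OF m(1) i(1) j(1)] range c by (intro T_mono T_closed) auto
  also have "\<dots> \<le> T (MX x (xs j) m) S"
    using nonarch_ultra[OF nonarch_X, of x "xs i" "xs j" m m] xs_in i j x m t0 range
    unfolding P_def by (intro T_mono T_closed) auto
  also have "\<dots> \<le> MX x x' m"
    using nonarch_ultra[OF nonarch_X, of x "xs j" x' m m] xs_in j x m t0 unfolding S_def by simp
  finally show ?thesis
    unfolding m_def .
qed

lemma bridge_left_cont:
  assumes "x \<in> X" "y \<in> Y" "0 < s"
  shows "continuous (at_left s) (bridge x y)"
  unfolding continuous_within
proof (cases "s \<le> t0")
  case True
  have "eventually (\<lambda>r. bridge x y r = bridge x y s) (at_left s)"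
    using True by (intro eventually_at_leftI[of "s - 1"]) (auto simp: bridge_eq_zero)
  then show "(bridge x y \<longlongrightarrow> bridge x y s) (at_left s)"
    by (rule tendsto_eventually)
next
  case False
  define f where "f i r = T (T (MX x (xs i) r) (MY (ys i) y r)) c" for i r
  have after_t0: "eventually (\<lambda>r. t0 < r) (at_left s)"
    using False by (intro eventually_at_leftI[of t0]) auto
  have "(f i \<longlongrightarrow> f i s) (at_left s)" if "i \<in> {1..N}" for i
  proof -
    have range: "eventually (\<lambda>r. MX x (xs i) r \<in> {0..1} \<and> MY (ys i) y r \<in> {0..1}) (at_left s)"
      using after_t0 X_range Y_range assms xs_in ys_in that t0 by (auto elim!: eventually_mono)
    have "(MX x (xs i) \<longlongrightarrow> MX x (xs i) s) (at_left s)"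
      and "(MY (ys i) y \<longlongrightarrow> MY (ys i) y s) (at_left s)"
      using nonarch_left_cont[OF nonarch_X, of x "xs i" s]
        nonarch_left_cont[OF nonarch_Y, of "ys i" y s] assms xs_in ys_in that
      unfolding continuous_within by auto
    then have inner: "((\<lambda>r. T (MX x (xs i) r) (MY (ys i) y r))
        \<longlongrightarrow> T (MX x (xs i) s) (MY (ys i) y s)) (at_left s)"
      using X_range Y_range assms xs_in ys_in that range by (intro tendsto_T) auto
    show ?thesis
      unfolding f_def
      by (rule tendsto_T[OF inner tendsto_const])
        (use range c X_range Y_range assms xs_in ys_in that
          in \<open>auto simp: T_nonneg T_le_one elim!: eventually_mono\<close>)
  qed
  then have "((\<lambda>r. Max ((\<lambda>i. f i r) ` {1..N})) \<longlongrightarrow> Max ((\<lambda>i. f i s) ` {1..N})) (at_left s)"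
    using N by (intro tendsto_Max_finite) auto
  moreover have "eventually (\<lambda>r. Max ((\<lambda>i. f i r) ` {1..N}) = bridge x y r) (at_left s)"
    using after_t0 by eventually_elim (simp add: f_def net_bridge_def)
  ultimately show "(bridge x y \<longlongrightarrow> bridge x y s) (at_left s)"
    using False Lim_transform_eventually by (fastforce simp: f_def net_bridge_def)
qed

lemma bridge_swap:
  assumes "x \<in> X" "y \<in> Y" "0 \<le> s"
  shows "net_bridge T MY MX ys xs N c t0 y x s = bridge x y s"
proof -
  have "T (T (MY y (ys i) s) (MX (xs i) x s)) c = T (T (MX x (xs i) s) (MY (ys i) y s)) c"
    if "t0 < s" "i \<in> {1..N}" for i
    using that assms t0 xs_in ys_in X_range Y_range T_commute
      nonarch_commute[OF nonarch_X, of x "xs i" s] nonarch_commute[OF nonarch_Y, of y "ys i" s]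
    by auto
  then have "(\<lambda>i. T (T (MY y (ys i) s) (MX (xs i) x s)) c) ` {1..N}
      = (\<lambda>i. T (T (MX x (xs i) s) (MY (ys i) y s)) c) ` {1..N}" if "t0 < s"
    using that by (intro image_cong) auto
  then show ?thesis
    by (simp add: net_bridge_def)
qed

end

lemma net_gluing_swap:
  "net_gluing T X MX Y MY xs ys N c t0 \<Longrightarrow> net_gluing T Y MY X MX ys xs N c t0"
  unfolding net_gluing_def by blast

context net_gluing
begin

lemma ultra_YYX:
  assumes "y \<in> Y" "y' \<in> Y" "x \<in> X" "0 < s" "0 < s'"
  shows "T (MY y y' s) (bridge x y' s') \<le> bridge x y (max s s')"
proof -
  interpret swapped: net_gluing T Y MY X MX ys xs N c t0
    using net_gluing_axioms by (rule net_gluing_swap)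
  show ?thesis
    using swapped.ultra_XXY[OF assms] assms bridge_swap by simp
qed

lemma ultra_YXY:
  assumes "y \<in> Y" "y' \<in> Y" "x \<in> X" "0 < s" "0 < s'"
  shows "T (bridge x y s) (bridge x y' s') \<le> MY y y' (max s s')"
proof -
  interpret swapped: net_gluing T Y MY X MX ys xs N c t0
    using net_gluing_axioms by (rule net_gluing_swap)
  show ?thesis
    using swapped.ultra_XYX[OF assms] assms bridge_swap by simp
qed

lemma ultra_XYY:
  assumes "x \<in> X" "y \<in> Y" "y' \<in> Y" "0 < s" "0 < s'"
  shows "T (bridge x y s) (MY y y' s') \<le> bridge x y' (max s s')"
  using ultra_YYX[of y' y x s' s] assms Y_range bridge_range T_commute
    nonarch_commute[OF nonarch_Y, of y y' s']
  by (simp add: max.commute)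

lemma ultra_YXX:
  assumes "y \<in> Y" "x \<in> X" "x' \<in> X" "0 < s" "0 < s'"
  shows "T (bridge x y s) (MX x x' s') \<le> bridge x' y (max s s')"
  using ultra_XXY[of x' x y s' s] assms X_range bridge_range T_commute
    nonarch_commute[OF nonarch_X, of x x' s']
  by (simp add: max.commute)

lemma glue_non_archimedean: "non_archimedean (X <+> Y) glue T"
proof (rule non_archimedeanI)
  show "tnorm T" ..
  show "glue p q s \<in> {0..1}" if "p \<in> X <+> Y" "q \<in> X <+> Y" "0 \<le> s" for p q s
    using that X_range Y_range bridge_range by auto
  show "glue p q 0 = 0" if "p \<in> X <+> Y" "q \<in> X <+> Y" for p q
    using that nonarch_zero[OF nonarch_X] nonarch_zero[OF nonarch_Y] t0
    by (auto simp: bridge_eq_zero)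
  show "(\<forall>s>0. glue p q s = 1) \<longleftrightarrow> p = q" if "p \<in> X <+> Y" "q \<in> X <+> Y" for p q
  proof -
    have never_one: "(\<forall>s>0. bridge x y s = 1) \<longleftrightarrow> False" for x y
      using t0 bridge_eq_zero[of t0 x y] by auto
    show ?thesis
      using that by (cases p; cases q)
        (auto simp: never_one nonarch_eq_one_iff[OF nonarch_X] nonarch_eq_one_iff[OF nonarch_Y]
          nonarch_self[OF nonarch_X] nonarch_self[OF nonarch_Y])
  qed
  show "glue p q s = glue q p s" if "p \<in> X <+> Y" "q \<in> X <+> Y" "0 < s" for p q s
    using that nonarch_commute[OF nonarch_X] nonarch_commute[OF nonarch_Y] by auto
  show "T (glue p q s) (glue q r s') \<le> glue p r (max s s')"
    if "p \<in> X <+> Y" "q \<in> X <+> Y" "r \<in> X <+> Y" "0 < s" "0 < s'" for p q r s s'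
    using that nonarch_ultra[OF nonarch_X] nonarch_ultra[OF nonarch_Y]
      ultra_XXY ultra_XYX ultra_XYY ultra_YXX ultra_YXY ultra_YYX
    by (cases p; cases q; cases r) auto
  show "continuous (at_left s) (glue p q)" if "p \<in> X <+> Y" "q \<in> X <+> Y" "0 < s" for p q s
    using that nonarch_left_cont[OF nonarch_X] nonarch_left_cont[OF nonarch_Y] bridge_left_cont
    by (auto simp: net_glue_def)
qed

lemma glue_admissible: "admissible X MX Y MY T glue"
  unfolding admissible_def using glue_non_archimedean by simp

lemma bridge_net_lower:
  assumes "is_net X MX t0 (1 - c) N xs" "x \<in> X" "t0 < t"
  shows "\<exists>i\<in>{1..N}. T c c \<le> bridge x (ys i) t"
proof -
  obtain i where i: "i \<in> {1..N}" "c < MX x (xs i) t0"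
    using assms(1,2) unfolding is_net_def by auto
  have "c \<le> MX x (xs i) t"
    using i nonarch_mono[OF nonarch_X, of x "xs i" t0 t] assms xs_in t0 by auto
  then have "T c c \<le> T (MX x (xs i) t) c"
    using X_range assms xs_in i c t0 by (intro T_mono) auto
  also have "\<dots> = T (T (MX x (xs i) t) (MY (ys i) (ys i) t)) c"
    using nonarch_self[OF nonarch_Y] ys_in i X_range xs_in assms t0 T_one by simp
  also have "\<dots> \<le> bridge x (ys i) t"
    using bridge_ge assms(3) i(1) .
  finally show ?thesis
    using i(1) by blast
qed

lemma glue_hausdorff_ge:
  assumes "is_net X MX t0 (1 - c) N xs" "is_net Y MY t0 (1 - c) N ys"
    and "t0 < t" "X \<noteq> {}" "Y \<noteq> {}"
  shows "T c c \<le> hausdorff_fuzzy glue (Inl ` X) (Inr ` Y) t"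
proof -
  interpret swapped: net_gluing T Y MY X MX ys xs N c t0
    using net_gluing_axioms by (rule net_gluing_swap)
  have "T c c \<le> Sup ((\<lambda>q. glue (Inl x) q t) ` Inr ` Y)" if x: "x \<in> X" for x
  proof -
    obtain i where "i \<in> {1..N}" "T c c \<le> bridge x (ys i) t"
      using bridge_net_lower assms x by blast
    moreover have "bdd_above ((\<lambda>q. glue (Inl x) q t) ` Inr ` Y)"
      using x bridge_range assms(3) t0 by (intro bdd_aboveI[of _ 1]) auto
    ultimately show ?thesis
      using ys_in by (auto intro!: cSup_upper2)
  qed
  moreover have "T c c \<le> Sup ((\<lambda>p. glue p (Inr y) t) ` Inl ` X)" if y: "y \<in> Y" for y
  proof -
    obtain i where "i \<in> {1..N}" "T c c \<le> swapped.bridge y (xs i) t"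
      using swapped.bridge_net_lower assms y by blast
    moreover have "bdd_above ((\<lambda>p. glue p (Inr y) t) ` Inl ` X)"
      using y bridge_range assms(3) t0 by (intro bdd_aboveI[of _ 1]) auto
    ultimately show ?thesis
      using y xs_in bridge_swap assms(3) t0 by (auto intro!: cSup_upper2)
  qed
  ultimately show ?thesis
    unfolding hausdorff_fuzzy_def using assms(4,5) by (auto intro!: cInf_greatest)
qed

end

lemma M_GH_ge_if_comparable_nets:
  assumes "non_archimedean X MX T" "non_archimedean Y MY T" "X \<noteq> {}" "Y \<noteq> {}"
    and "is_net X MX t0 (1 - c) N xs" "is_net Y MY t0 (1 - c) N ys"
    and "c \<in> {0..1}" "0 < t0" "t0 < t"
    and "\<And>s i j. t0 < s \<Longrightarrow> i \<in> {1..N} \<Longrightarrow> j \<in> {1..N} \<Longrightarrow>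
      T (MY (ys i) (ys j) s) c \<le> MX (xs i) (xs j) s"
    and "\<And>s i j. t0 < s \<Longrightarrow> i \<in> {1..N} \<Longrightarrow> j \<in> {1..N} \<Longrightarrow>
      T (MX (xs i) (xs j) s) c \<le> MY (ys i) (ys j) s"
  shows "T c c \<le> M_GH X MX Y MY T t"
proof -
  have "1 \<le> N"
    using assms(3,5) unfolding is_net_def by fastforce
  with assms interpret net_gluing T X MX Y MY xs ys N c t0
    unfolding is_net_def by unfold_locales auto
  show ?thesis
    using glue_hausdorff_ge[OF assms(5,6,9,3,4)] glue_admissible assms(3,4,8,9)
    by (intro le_M_GH) auto
qed

lemma (in tnorm) TN1_subseq_M_GH_ge:
  fixes X :: "nat \<Rightarrow> 'a set" and M :: "nat \<Rightarrow> 'a \<Rightarrow> 'a \<Rightarrow> real \<Rightarrow> real"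
  assumes "TN1 T" and spaces: "\<And>n. non_archimedean (X n) (M n) T"
    and nonempty: "\<And>n. X n \<noteq> {}"
    and t0: "0 < t0" "t0 < t" and c: "0 \<le> c" "c < 1" and b: "0 < b" "b \<le> 1" "0 < T b c"
    and diam: "\<And>n. b \<le> fdiam (X n) (M n) t0"
    and net: "\<And>n. is_net (X n) (M n) t0 (1 - c) N (xs n)"
    and ratio: "\<And>n m s i j. t0 < s \<Longrightarrow> i \<in> {1..N} \<Longrightarrow> j \<in> {1..N} \<Longrightarrow>
      M n (xs n i) (xs n j) s < M m (xs m i) (xs m j) s \<Longrightarrow>
      M n (xs n i) (xs n j) t0 / T (M m (xs m i) (xs m j) t0) c
        \<le> M n (xs n i) (xs n j) s / T (M m (xs m i) (xs m j) s) c"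
  shows "\<exists>r :: nat \<Rightarrow> nat. strict_mono r \<and>
    (\<forall>j k. T c c \<le> M_GH (X (r j)) (M (r j)) (X (r k)) (M (r k)) T t)"
proof -
  have xs_in: "xs n i \<in> X n" if "i \<in> {1..N}" for n i
    using net that unfolding is_net_def by blast
  obtain r :: "nat \<Rightarrow> nat" where "strict_mono r"
    and comparable: "\<forall>j k i l s. i \<in> {1..N} \<longrightarrow> l \<in> {1..N} \<longrightarrow> t0 < s \<longrightarrow>
      T (M (r k) (xs (r k) i) (xs (r k) l) s) c \<le> M (r j) (xs (r j) i) (xs (r j) l) s"
    using TN1_comparable_subseq[OF \<open>TN1 T\<close>, of "{1..N}" c b t0 "\<lambda>n i j. M n (xs n i) (xs n j)"]
      c b xs_in ratio nonarch_range[OF spaces] nonarch_mono[OF spaces]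
      order_trans[OF diam fdiam_le[OF spaces]] t0
    by force
  have "T c c \<le> M_GH (X (r j)) (M (r j)) (X (r k)) (M (r k)) T t" for j k
    using comparable c t0
    by (intro M_GH_ge_if_comparable_nets[OF spaces spaces nonempty nonempty net net]) auto
  with \<open>strict_mono r\<close> show ?thesis
    by blast
qed

theorem mainTheorem6:
  fixes T :: "real \<Rightarrow> real \<Rightarrow> real"
    and X :: "nat \<Rightarrow> 'a set"
    and M :: "nat \<Rightarrow> 'a \<Rightarrow> 'a \<Rightarrow> real \<Rightarrow> real"
    and C :: "real \<Rightarrow> real"
    and Nf :: "real \<Rightarrow> real \<Rightarrow> nat"
  assumes tnorm: "cont_tnorm T"
    and spaces: "\<And>n. non_archimedean (X n) (M n) T"
    and nonempty: "\<And>n. X n \<noteq> {}"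
    and compact: "\<And>n. fcompact (X n) (M n)"
    and tn1: "TN1 T"
    and C_mono: "mono_on {0<..} C"
    and C_lcont: "\<And>s. s > 0 \<Longrightarrow> continuous (at_left s) C"
    and C_range: "\<And>s. s > 0 \<Longrightarrow> 0 < C s \<and> C s \<le> 1"
    and C_diam: "\<And>s n. s > 0 \<Longrightarrow> C s \<le> fdiam (X n) (M n) s"
    and cov: "\<And>t e n. t > 0 \<Longrightarrow> 0 < e \<Longrightarrow> e < 1 \<Longrightarrow> cover_number (X n) (M n) e t \<le> Nf e t"
    and nets: "\<And>t e. t > 0 \<Longrightarrow> 0 < e \<Longrightarrow> e < 1 \<Longrightarrow>
       \<exists>xs :: nat \<Rightarrow> nat \<Rightarrow> 'a.
         (\<forall>n. is_net (X n) (M n) t e (Nf e t) (xs n)) \<and>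
         (\<forall>n m s i j. s > t \<longrightarrow> i \<in> {1..Nf e t} \<longrightarrow> j \<in> {1..Nf e t} \<longrightarrow>
            M n (xs n i) (xs n j) s < M m (xs m i) (xs m j) s \<longrightarrow>
            M n (xs n i) (xs n j) s / T (M m (xs m i) (xs m j) s) (1 - e)
              \<ge> M n (xs n i) (xs n j) t / T (M m (xs m i) (xs m j) t) (1 - e))"
  shows "\<forall>t>0. \<forall>e. 0 < e \<and> e < 1 \<longrightarrow>
           (\<exists>r :: nat \<Rightarrow> nat. strict_mono r \<and>
              (\<forall>j k. M_GH (X (r j)) (M (r j)) (X (r k)) (M (r k)) T t > T (1 - e) (1 - e)))"
proof (intro allI impI)
  fix t e :: real
  assume "0 < t" and e: "0 < e \<and> e < 1"
  interpret tnorm T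
    using tnorm by (rule tnorm.intro)
  define t0 where "t0 = t / 2"
  have t0: "0 < t0" "t0 < t"
    using \<open>0 < t\<close> by (simp_all add: t0_def)
  have "T (1 - e) (1 - e) < 1"
    using T_le_left[of "1 - e" "1 - e"] e by auto
  then obtain c where c: "0 < c" "c < 1" "T (1 - e) (1 - e) < T c c" "0 < T (C t0) c"
    using T_near_one C_range[OF t0(1)] by blast
  obtain xs where "\<And>n. is_net (X n) (M n) t0 (1 - c) (Nf (1 - c) t0) (xs n)"
    and "\<And>n m s i j. t0 < s \<Longrightarrow> i \<in> {1..Nf (1 - c) t0} \<Longrightarrow> j \<in> {1..Nf (1 - c) t0} \<Longrightarrow>
      M n (xs n i) (xs n j) s < M m (xs m i) (xs m j) s \<Longrightarrow>
      M n (xs n i) (xs n j) t0 / T (M m (xs m i) (xs m j) t0) c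
        \<le> M n (xs n i) (xs n j) s / T (M m (xs m i) (xs m j) s) c"
    using nets[OF t0(1), of "1 - c"] c by simp blast
  then obtain r :: "nat \<Rightarrow> nat" where "strict_mono r"
    and "\<And>j k. T c c \<le> M_GH (X (r j)) (M (r j)) (X (r k)) (M (r k)) T t"
    using TN1_subseq_M_GH_ge[where X = X and M = M and ?t0.0 = t0 and t = t and c = c
        and b = "C t0"]
      tn1 spaces nonempty t0 c C_range[OF t0(1)] C_diam[OF t0(1)] by (metis less_imp_le)
  then show "\<exists>r :: nat \<Rightarrow> nat. strict_mono r \<and>
      (\<forall>j k. M_GH (X (r j)) (M (r j)) (X (r k)) (M (r k)) T t > T (1 - e) (1 - e))"
    using c(3) less_le_trans by blast
qed

end
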